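(* Let $M$ be a connected manifold of dimension $n+1\ge2$ with a Kähler affine structure $(\nabla,g)$ that is Kähler affine Einstein, i.e. $\mathcal{R}_{ij}=f g_{ij}$ for some function $f$. Then the Kähler affine scalar curvature $\mathcal{S}$ is constant.
   Context: A Kähler affine structure $(\nabla,g)$ consists of a flat torsion-free affine connection $\nabla$ and a pseudo-Riemannian metric $g$ with $\nabla_{[i}g_{j]k}=0$. The Koszul form is $H_i=g^{pq}\nabla_ig_{pq}$, the Kähler affine Ricci tensor is $\mathcal{R}_{ij}=-\nabla_iH_j$, and $\mathcal{S}=g^{ij}\mathcal{R}_{ij}$. *)

theory Defs
  imports "HOL-Analysis.Analysis"
begin

definition pd :: "'n::finite \<Rightarrow> (real^'n \<Rightarrow> real) \<Rightarrow> real^'n \<Rightarrow> real" where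
  "pd i h x = frechet_derivative h (at x) (axis i 1)"

fun Ck :: "nat \<Rightarrow> (real^'n::finite) set \<Rightarrow> (real^'n \<Rightarrow> real) \<Rightarrow> bool" where
  "Ck 0 S h = continuous_on S h"
| "Ck (Suc k) S h = (h differentiable_on S \<and> (\<forall>i. Ck k S (pd i h)))"

definition smooth_on :: "(real^'n::finite) set \<Rightarrow> (real^'n \<Rightarrow> real) \<Rightarrow> bool" where
  "smooth_on S h = (\<forall>k. Ck k S h)"

type_synonym ('a, 'n) chart = "'a set \<times> ('a \<Rightarrow> real^'n)"

text \<open>Transition map from chart c to chart d, defined on the image of the overlap under c.\<close>
definition transition :: "('a, 'n::finite) chart \<Rightarrow> ('a, 'n) chart \<Rightarrow> real^'n \<Rightarrow> real^'n" where
  "transition c d y = snd d (inv_into (fst c) (snd c) y)"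

definition overlap_img :: "('a, 'n::finite) chart \<Rightarrow> ('a, 'n) chart \<Rightarrow> (real^'n) set" where
  "overlap_img c d = snd c ` (fst c \<inter> fst d)"

definition manifold_atlas :: "'a topology \<Rightarrow> ('a, 'n::finite) chart set \<Rightarrow> bool" where
  "manifold_atlas X A \<longleftrightarrow>
     Hausdorff_space X \<and> second_countable X \<and>
     (\<forall>c\<in>A. openin X (fst c) \<and> open (snd c ` fst c) \<and>
        homeomorphic_map (subtopology X (fst c)) (top_of_set (snd c ` fst c)) (snd c)) \<and>
     (\<Union>c\<in>A. fst c) = topspace X"

text \<open>Flat torsion-free connection, given by an atlas of affine charts (locally affine
  transition maps), together with a smooth pseudo-Riemannian metric given in each chart
  by its Gram matrix G c y (tensorial transformation law on overlaps), satisfying the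
  Kaehler affine condition nabla_i g_jk = nabla_j g_ik (in affine coordinates nabla = d).\<close>
definition kahler_affine :: "'a topology \<Rightarrow> ('a, 'n::finite) chart set
      \<Rightarrow> (('a, 'n) chart \<Rightarrow> real^'n \<Rightarrow> real^'n^'n) \<Rightarrow> bool" where
  "kahler_affine X A G \<longleftrightarrow>
     manifold_atlas X A \<and>
     (\<forall>c\<in>A. \<forall>d\<in>A. \<forall>x\<in>overlap_img c d. \<exists>r>0. \<exists>(L::real^'n^'n) b.
        \<forall>y\<in>ball x r \<inter> overlap_img c d.
          transition c d y = L *v y + b \<and>
          G c y = transpose L ** G d (transition c d y) ** L) \<and>
     (\<forall>c\<in>A. \<forall>y\<in>snd c ` fst c. transpose (G c y) = G c y \<and> det (G c y) \<noteq> 0) \<and>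
     (\<forall>c\<in>A. \<forall>i j. smooth_on (snd c ` fst c) (\<lambda>z. G c z $ i $ j)) \<and>
     (\<forall>c\<in>A. \<forall>y\<in>snd c ` fst c. \<forall>i j k.
        pd i (\<lambda>z. G c z $ j $ k) y = pd j (\<lambda>z. G c z $ i $ k) y)"

definition koszul :: "(('a, 'n::finite) chart \<Rightarrow> real^'n \<Rightarrow> real^'n^'n)
      \<Rightarrow> ('a, 'n) chart \<Rightarrow> 'n \<Rightarrow> real^'n \<Rightarrow> real" where
  "koszul G c i y = (\<Sum>p\<in>UNIV. \<Sum>q\<in>UNIV. matrix_inv (G c y) $ p $ q * pd i (\<lambda>z. G c z $ p $ q) y)"

definition ka_ricci :: "(('a, 'n::finite) chart \<Rightarrow> real^'n \<Rightarrow> real^'n^'n)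
      \<Rightarrow> ('a, 'n) chart \<Rightarrow> 'n \<Rightarrow> 'n \<Rightarrow> real^'n \<Rightarrow> real" where
  "ka_ricci G c i j y = - pd i (\<lambda>z. koszul G c j z) y"

definition ka_scalar :: "(('a, 'n::finite) chart \<Rightarrow> real^'n \<Rightarrow> real^'n^'n)
      \<Rightarrow> ('a, 'n) chart \<Rightarrow> real^'n \<Rightarrow> real" where
  "ka_scalar G c y = (\<Sum>i\<in>UNIV. \<Sum>j\<in>UNIV. matrix_inv (G c y) $ i $ j * ka_ricci G c i j y)"

end

theory Submission
  imports Defs
begin

text \<open>In an affine chart the Einstein condition reads \<open>d\<^sub>i H\<^sub>j = F g\<^sub>i\<^sub>j\<close> with \<open>F = -f\<close>.
  Differentiating once more, the symmetry of second derivatives and the Kaehler condition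
  \<open>d\<^sub>k g\<^sub>i\<^sub>j = d\<^sub>i g\<^sub>k\<^sub>j\<close> leave \<open>(d\<^sub>k F) g\<^sub>i\<^sub>j = (d\<^sub>i F) g\<^sub>k\<^sub>j\<close>. A nondegenerate \<open>g\<close> in dimension
  at least two admits no such relation unless \<open>dF = 0\<close>, so \<open>f\<close> is locally constant, hence
  constant on the connected manifold, and then \<open>S = g\<^sup>i\<^sup>j f g\<^sub>i\<^sub>j = (n+1) f\<close>.\<close>

subsection \<open>Partial derivatives\<close>

lemma has_derivative_cong_open:
  assumes "open S" "y \<in> S" "\<And>z. z \<in> S \<Longrightarrow> h z = h' z"
  shows "(h has_derivative D) (at y) \<longleftrightarrow> (h' has_derivative D) (at y)"
proof
  assume "(h has_derivative D) (at y)"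
  then show "(h' has_derivative D) (at y)"
    by (rule has_derivative_transform_within_open[OF _ assms(1,2)]) (simp add: assms(3))
next
  assume "(h' has_derivative D) (at y)"
  then show "(h has_derivative D) (at y)"
    by (rule has_derivative_transform_within_open[OF _ assms(1,2)]) (simp add: assms(3))
qed

lemma differentiable_on_cong_open:
  assumes "open S" "\<And>z. z \<in> S \<Longrightarrow> h z = h' z"
  shows "h differentiable_on S \<longleftrightarrow> h' differentiable_on S"
proof -
  have "(h has_derivative D) (at y) \<longleftrightarrow> (h' has_derivative D) (at y)" if "y \<in> S" for y D
    using has_derivative_cong_open[OF assms(1) that] assms(2) by blast
  then show ?thesis
    unfolding differentiable_on_eq_differentiable_at[OF assms(1)] differentiable_def by blast
qed

lemma pd_cong_open:
  assumes "open S" "y \<in> S" "\<And>z. z \<in> S \<Longrightarrow> h z = h' z"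
  shows "pd i h y = pd i h' y"
  unfolding pd_def frechet_derivative_def using has_derivative_cong_open[OF assms] by simp

lemma pd_const: "pd i (\<lambda>z. c) = (\<lambda>y. 0)"
  unfolding pd_def by simp

lemma pd_add:
  assumes "h differentiable (at y)" "g differentiable (at y)"
  shows "pd i (\<lambda>z. h z + g z) y = pd i h y + pd i g y"
proof -
  have "((\<lambda>z. h z + g z) has_derivative
      (\<lambda>v. frechet_derivative h (at y) v + frechet_derivative g (at y) v)) (at y)"
    using assms by (intro has_derivative_add) (simp_all add: frechet_derivative_works)
  from frechet_derivative_at[OF this] show ?thesis unfolding pd_def by (simp add: fun_eq_iff)
qed

lemma pd_mult:
  assumes "h differentiable (at y)" "g differentiable (at y)"
  shows "pd i (\<lambda>z. h z * g z) y = h y * pd i g y + pd i h y * g y"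
proof -
  have "((\<lambda>z. h z * g z) has_derivative
      (\<lambda>v. h y * frechet_derivative g (at y) v + frechet_derivative h (at y) v * g y)) (at y)"
    using assms by (intro has_derivative_mult) (simp_all add: frechet_derivative_works)
  from frechet_derivative_at[OF this] show ?thesis unfolding pd_def by (simp add: fun_eq_iff)
qed

lemma pd_inverse:
  assumes "h differentiable (at y)" "h y \<noteq> 0"
  shows "pd i (\<lambda>z. inverse (h z)) y = - (pd i h y * (inverse (h y) * inverse (h y)))"
proof -
  have "((\<lambda>z. inverse (h z)) has_derivative
      (\<lambda>v. - (inverse (h y) * frechet_derivative h (at y) v * inverse (h y)))) (at y)"
    using assms by (intro Deriv.has_derivative_inverse) (simp_all add: frechet_derivative_works)
  from frechet_derivative_at[OF this] show ?thesis
    unfolding pd_def by (simp add: fun_eq_iff algebra_simps)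
qed

lemma pd_has_real_derivative_along_axis:
  fixes w :: "real^'n \<Rightarrow> real"
  assumes "w differentiable (at (x + t *\<^sub>R axis k 1))"
  shows "((\<lambda>s. w (x + s *\<^sub>R axis k 1)) has_real_derivative pd k w (x + t *\<^sub>R axis k 1)) (at t)"
proof -
  let ?D = "frechet_derivative w (at (x + t *\<^sub>R axis k 1))"
  have w: "(w has_derivative ?D) (at (x + t *\<^sub>R axis k 1))"
    using assms frechet_derivative_works by blast
  have "((\<lambda>s. x + s *\<^sub>R axis k 1) has_derivative (\<lambda>h. h *\<^sub>R axis k 1)) (at t)"
    by (auto intro!: derivative_eq_intros)
  from has_derivative_compose[OF this w]
  have "((\<lambda>s. w (x + s *\<^sub>R axis k 1)) has_derivative (\<lambda>h. ?D (h *\<^sub>R axis k 1))) (at t)" .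
  moreover have "(\<lambda>h. ?D (h *\<^sub>R axis k 1)) = (\<lambda>h. ?D (axis k 1) * h)"
    using linear_scale[OF has_derivative_linear[OF w]] by (simp add: fun_eq_iff mult.commute)
  ultimately show ?thesis unfolding has_field_derivative_def pd_def by simp
qed

lemma pd_zero_imp_constant:
  fixes Q :: "real^'n \<Rightarrow> real"
  assumes "open S" "connected S"
    and "\<And>z. z \<in> S \<Longrightarrow> Q differentiable (at z)"
    and "\<And>k z. z \<in> S \<Longrightarrow> pd k Q z = 0"
    and "x \<in> S" "y \<in> S"
  shows "Q x = Q y"
proof (rule has_derivative_zero_unique_connected[OF assms(1,2) _ assms(5,6)])
  fix z assume z: "z \<in> S"
  let ?D = "frechet_derivative Q (at z)"
  have QD: "(Q has_derivative ?D) (at z)" using assms(3)[OF z] frechet_derivative_works by blast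
  have lin: "linear ?D" by (rule has_derivative_linear[OF QD])
  have "?D = (\<lambda>h. 0)"
  proof
    fix v
    have "?D v = ?D (\<Sum>i\<in>UNIV. v $ i *s axis i 1)" by (simp add: basis_expansion)
    also have "\<dots> = (\<Sum>i\<in>UNIV. v $ i * ?D (axis i 1))"
      by (simp add: linear_sum[OF lin] scalar_mult_eq_scaleR linear_scale[OF lin])
    also have "\<dots> = 0" using assms(4)[OF z] by (simp add: pd_def)
    finally show "?D v = 0" .
  qed
  then show "(Q has_derivative (\<lambda>h. 0)) (at z)" using QD by simp
qed

subsection \<open>Functions of class \<open>C\<^sup>k\<close>\<close>

lemma Ck_cong:
  assumes "open S" "\<And>z. z \<in> S \<Longrightarrow> h z = h' z"
  shows "Ck k S h \<longleftrightarrow> Ck k S h'"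
  using assms(2)
proof (induction k arbitrary: h h')
  case 0
  then show ?case using continuous_on_cong[OF refl] by simp
next
  case (Suc k)
  have "h differentiable_on S \<longleftrightarrow> h' differentiable_on S"
    by (rule differentiable_on_cong_open[OF assms(1) Suc.prems])
  moreover have "Ck k S (pd i h) \<longleftrightarrow> Ck k S (pd i h')" for i
  proof (rule Suc.IH)
    show "pd i h z = pd i h' z" if "z \<in> S" for z
      using pd_cong_open[OF assms(1) that] Suc.prems by blast
  qed
  ultimately show ?case by simp
qed

lemma Ck_transfer:
  assumes "open S" "Ck k S h'" "\<And>z. z \<in> S \<Longrightarrow> h z = h' z"
  shows "Ck k S h"
  using Ck_cong[OF assms(1), of h h' k] assms(2,3) by blast

lemma Ck_SucD: "Ck (Suc k) S h \<Longrightarrow> Ck k S h"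
proof (induction k arbitrary: h)
  case 0
  then show ?case by (simp add: differentiable_imp_continuous_on)
next
  case (Suc k)
  then show ?case by (metis Ck.simps(2))
qed

lemma Ck_mono: "Ck m S h \<Longrightarrow> k \<le> m \<Longrightarrow> Ck k S h"
  by (induction m) (auto simp: le_Suc_eq simp del: Ck.simps dest: Ck_SucD)

lemma Ck_subset: "Ck k S h \<Longrightarrow> T \<subseteq> S \<Longrightarrow> Ck k T h"
  by (induction k arbitrary: h) (auto intro: continuous_on_subset differentiable_on_subset)

lemma Ck_imp_differentiable_at:
  "Ck (Suc k) S h \<Longrightarrow> open S \<Longrightarrow> y \<in> S \<Longrightarrow> h differentiable (at y)"
  by (simp add: differentiable_on_eq_differentiable_at)

lemma Ck_const: "Ck k S (\<lambda>z. c)"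
  by (induction k arbitrary: c) (simp_all add: pd_const)

lemma Ck_add:
  assumes "open S"
  shows "Ck k S h \<Longrightarrow> Ck k S g \<Longrightarrow> Ck k S (\<lambda>z. h z + g z)"
proof (induction k arbitrary: h g)
  case 0
  then show ?case by (simp add: continuous_on_add)
next
  case (Suc k)
  have "Ck k S (\<lambda>z. pd i h z + pd i g z)" for i
    using Suc by simp
  moreover have "pd i (\<lambda>z. h z + g z) z = pd i h z + pd i g z" if "z \<in> S" for i z
    using Suc.prems that assms by (intro pd_add) (auto intro: Ck_imp_differentiable_at)
  ultimately have "Ck k S (pd i (\<lambda>z. h z + g z))" for i
    by (rule Ck_transfer[OF assms])
  moreover have "(\<lambda>z. h z + g z) differentiable_on S"
    using Suc.prems by (intro differentiable_on_add) auto
  ultimately show ?case by simp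
qed

lemma Ck_mult:
  assumes "open S"
  shows "Ck k S h \<Longrightarrow> Ck k S g \<Longrightarrow> Ck k S (\<lambda>z. h z * g z)"
proof (induction k arbitrary: h g)
  case 0
  then show ?case by (simp add: continuous_on_mult)
next
  case (Suc k)
  have "Ck k S (\<lambda>z. h z * pd i g z + pd i h z * g z)" for i
    using Ck_SucD[OF Suc.prems(1)] Ck_SucD[OF Suc.prems(2)] Suc.prems
    by (intro Ck_add[OF assms] Suc.IH) auto
  moreover have "pd i (\<lambda>z. h z * g z) z = h z * pd i g z + pd i h z * g z" if "z \<in> S" for i z
    using Suc.prems that assms by (intro pd_mult) (auto intro: Ck_imp_differentiable_at)
  ultimately have "Ck k S (pd i (\<lambda>z. h z * g z))" for i
    by (rule Ck_transfer[OF assms])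
  moreover have "(\<lambda>z. h z * g z) differentiable_on S"
    using Suc.prems by (intro differentiable_on_mult) auto
  ultimately show ?case by simp
qed

lemma Ck_inverse:
  assumes "open S"
  shows "Ck k S h \<Longrightarrow> (\<And>z. z \<in> S \<Longrightarrow> h z \<noteq> 0) \<Longrightarrow> Ck k S (\<lambda>z. inverse (h z))"
proof (induction k arbitrary: h)
  case 0
  then show ?case by (simp add: continuous_on_inverse)
next
  case (Suc k)
  have "Ck k S (\<lambda>z. inverse (h z))"
    using Suc.IH[OF Ck_SucD[OF Suc.prems(1)]] Suc.prems(2) by blast
  then have "Ck k S (\<lambda>z. (-1) * (pd i h z * (inverse (h z) * inverse (h z))))" for i
    using Suc.prems(1) by (intro Ck_mult[OF assms] Ck_const) auto
  moreover have "pd i (\<lambda>z. inverse (h z)) z = (-1) * (pd i h z * (inverse (h z) * inverse (h z)))"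
    if "z \<in> S" for i z
    using Suc.prems that assms by (simp add: pd_inverse Ck_imp_differentiable_at)
  ultimately have "Ck k S (pd i (\<lambda>z. inverse (h z)))" for i
    by (rule Ck_transfer[OF assms])
  moreover have "(\<lambda>z. inverse (h z)) differentiable_on S"
    using Suc.prems by (intro differentiable_on_inverse) auto
  ultimately show ?case by simp
qed

lemma Ck_sum:
  assumes "open S" "finite I" "\<And>a. a \<in> I \<Longrightarrow> Ck k S (h a)"
  shows "Ck k S (\<lambda>z. \<Sum>a\<in>I. h a z)"
  using assms(2,3)
proof (induction I rule: finite_induct)
  case empty
  then show ?case using Ck_const[of k S 0] by simp
next
  case (insert a I)
  then have "Ck k S (\<lambda>z. h a z + (\<Sum>a\<in>I. h a z))" by (intro Ck_add[OF assms(1)]) auto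
  with insert.hyps show ?case by simp
qed

lemma Ck_prod:
  assumes "open S" "finite I" "\<And>a. a \<in> I \<Longrightarrow> Ck k S (h a)"
  shows "Ck k S (\<lambda>z. \<Prod>a\<in>I. h a z)"
  using assms(2,3)
proof (induction I rule: finite_induct)
  case empty
  then show ?case using Ck_const[of k S 1] by simp
next
  case (insert a I)
  then have "Ck k S (\<lambda>z. h a z * (\<Prod>a\<in>I. h a z))" by (intro Ck_mult[OF assms(1)]) auto
  with insert.hyps show ?case by simp
qed

lemma Ck_det:
  fixes M :: "real^'n::finite \<Rightarrow> real^'m::finite^'m"
  assumes "open S" "\<And>i j. Ck k S (\<lambda>z. M z $ i $ j)"
  shows "Ck k S (\<lambda>z. det (M z))"
  unfolding det_def
proof (rule Ck_sum[OF assms(1)])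
  show "finite {p. p permutes (UNIV :: 'm set)}" by (simp add: finite_permutations)
  fix p :: "'m \<Rightarrow> 'm"
  show "Ck k S (\<lambda>z. of_int (sign p) * (\<Prod>i\<in>UNIV. M z $ i $ p i))"
    using Ck_prod[OF assms(1) finite_class.finite_UNIV, of k "\<lambda>i z. M z $ i $ p i"] assms(2)
    by (intro Ck_mult[OF assms(1) Ck_const]) blast
qed

subsection \<open>Matrices\<close>

lemma matrix_inv_inverse:
  fixes A :: "real^'n^'n"
  assumes "det A \<noteq> 0"
  shows "A ** matrix_inv A = mat 1" "matrix_inv A ** A = mat 1"
proof -
  have "\<exists>A'. A ** A' = mat 1 \<and> A' ** A = mat 1"
    using assms invertible_det_nz unfolding invertible_def by blast
  then have "A ** matrix_inv A = mat 1 \<and> matrix_inv A ** A = mat 1"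
    unfolding matrix_inv_def by (rule someI_ex)
  then show "A ** matrix_inv A = mat 1" "matrix_inv A ** A = mat 1" by auto
qed

lemma matrix_inv_cramer:
  fixes A :: "real^'n^'n"
  assumes "det A \<noteq> 0"
  shows "matrix_inv A $ p $ q = det (\<chi> i j. if j = p then axis q 1 $ i else A $ i $ j) / det A"
proof -
  define x where "x = matrix_inv A *v axis q 1"
  have "A *v x = axis q 1"
    unfolding x_def matrix_vector_mul_assoc by (simp add: matrix_inv_inverse[OF assms])
  then have "x $ p = det (\<chi> i j. if j = p then axis q 1 $ i else A $ i $ j) / det A"
    using cramer[OF assms] by simp
  moreover have "x $ p = matrix_inv A $ p $ q"
    unfolding x_def by (simp add: matrix_vector_mult_def axis_def if_distrib cong: if_cong)
  ultimately show ?thesis by simp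
qed

lemma Ck_matrix_inv:
  fixes M :: "real^'n::finite \<Rightarrow> real^'m::finite^'m"
  assumes S: "open S" and M: "\<And>i j. Ck k S (\<lambda>z. M z $ i $ j)"
    and det: "\<And>z. z \<in> S \<Longrightarrow> det (M z) \<noteq> 0"
  shows "Ck k S (\<lambda>z. matrix_inv (M z) $ p $ q)"
proof (rule Ck_transfer[OF S])
  have "Ck k S (\<lambda>z. (\<chi> i j. if j = p then axis q 1 $ i else M z $ i $ j) $ i $ j)" for i j
    using M Ck_const by (cases "j = p") simp_all
  then show "Ck k S (\<lambda>z. det (\<chi> i j. if j = p then axis q 1 $ i else M z $ i $ j) * inverse (det (M z)))"
    by (intro Ck_mult[OF S] Ck_det[OF S] Ck_inverse[OF S] M det)
  show "matrix_inv (M z) $ p $ q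
      = det (\<chi> i j. if j = p then axis q 1 $ i else M z $ i $ j) * inverse (det (M z))" if "z \<in> S" for z
    using matrix_inv_cramer[OF det[OF that]] by (simp add: divide_inverse)
qed

lemma trace_matrix_inv_mult_symmetric:
  fixes g :: "real^'n^'n"
  assumes "transpose g = g" "det g \<noteq> 0"
  shows "(\<Sum>i\<in>UNIV. \<Sum>j\<in>UNIV. matrix_inv g $ i $ j * g $ i $ j) = real CARD('n)"
proof -
  have "(\<Sum>j\<in>UNIV. matrix_inv g $ i $ j * g $ i $ j) = (matrix_inv g ** g) $ i $ i" for i
    using assms(1) by (simp add: matrix_matrix_mult_def vec_eq_iff transpose_def)
  then show ?thesis by (simp add: matrix_inv_inverse[OF assms(2)] mat_def)
qed

text \<open>Contracting the relation with \<open>x = v\<^sub>k e\<^sub>i - v\<^sub>i e\<^sub>k\<close> gives \<open>x g = 0\<close>, so \<open>x = 0\<close>.\<close>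

lemma tensor_product_swap_symmetric_imp_zero:
  fixes g :: "real^'n^'n" and v :: "'n \<Rightarrow> real"
  assumes "CARD('n) \<ge> 2" "det g \<noteq> 0"
    and swap: "\<And>i j k. v k * g $ i $ j = v i * g $ k $ j"
  shows "v k = 0"
proof (rule ccontr)
  assume vk: "v k \<noteq> 0"
  have "UNIV \<noteq> {k}"
  proof
    assume "UNIV = {k}"
    then have "CARD('n) = card {k}" by (simp only:)
    with assms(1) show False by simp
  qed
  then obtain i where ik: "i \<noteq> k" by blast
  define x :: "real^'n" where "x = (\<chi> l. (if l = i then v k else 0) - (if l = k then v i else 0))"
  have "x \<noteq> 0" using vk ik by (auto simp: x_def vec_eq_iff)
  moreover have "transpose g *v x = 0"
  proof -
    have "(x v* g) $ j = (\<Sum>l\<in>UNIV. if l = i then v k * g $ l $ j else 0)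
        - (\<Sum>l\<in>UNIV. if l = k then v i * g $ l $ j else 0)" for j
      by (simp add: x_def vector_matrix_mult_def left_diff_distrib sum_subtractf
          if_distrib[where f="\<lambda>t. t * _"] cong: if_cong)
    then show ?thesis using swap by (simp add: vec_eq_iff)
  qed
  moreover have "\<exists>B. B ** transpose g = mat 1"
    using assms(2) invertible_det_nz[of "transpose g"] unfolding invertible_def by auto
  ultimately show False using matrix_left_invertible_ker by blast
qed

subsection \<open>Symmetry of second partial derivatives\<close>

lemma second_difference_mvt:
  fixes w :: "real^'n \<Rightarrow> real"
  assumes ball: "ball y r \<subseteq> S" and t: "0 < t" "2 * t < r"
    and dw: "\<And>z. z \<in> S \<Longrightarrow> w differentiable (at z)"
    and dkw: "\<And>z. z \<in> S \<Longrightarrow> pd k w differentiable (at z)"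
  shows "\<exists>\<sigma> \<tau>. 0 < \<sigma> \<and> \<sigma> < t \<and> 0 < \<tau> \<and> \<tau> < t \<and>
    w (y + t *\<^sub>R axis k 1 + t *\<^sub>R axis i 1) - w (y + t *\<^sub>R axis k 1) - w (y + t *\<^sub>R axis i 1) + w y
      = t * t * pd i (pd k w) (y + \<sigma> *\<^sub>R axis k 1 + \<tau> *\<^sub>R axis i 1)"
proof -
  let ?a = "axis k 1 :: real^'n" and ?b = "axis i 1 :: real^'n"
  have in_S: "y + s *\<^sub>R ?a + u *\<^sub>R ?b \<in> S" if "0 \<le> s" "s \<le> t" "0 \<le> u" "u \<le> t" for s u
  proof -
    have "norm (s *\<^sub>R ?a + u *\<^sub>R ?b) \<le> s + u"
      using norm_triangle_ineq[of "s *\<^sub>R ?a" "u *\<^sub>R ?b"] that by simp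
    then have "dist (y + (s *\<^sub>R ?a + u *\<^sub>R ?b)) y < r"
      using that t by (simp add: dist_norm)
    then show ?thesis using ball by (auto simp: dist_commute add.assoc)
  qed
  define \<phi> where "\<phi> s = w (y + t *\<^sub>R ?b + s *\<^sub>R ?a) - w (y + s *\<^sub>R ?a)" for s
  define \<phi>' where "\<phi>' s = pd k w (y + t *\<^sub>R ?b + s *\<^sub>R ?a) - pd k w (y + s *\<^sub>R ?a)" for s
  have "DERIV \<phi> s :> \<phi>' s" if "0 \<le> s" "s \<le> t" for s
    unfolding \<phi>_def \<phi>'_def
    using in_S[of s t] in_S[of s 0] that t
    by (intro DERIV_diff pd_has_real_derivative_along_axis dw) (simp_all add: algebra_simps)
  then obtain \<sigma> where \<sigma>: "0 < \<sigma>" "\<sigma> < t" "\<phi> t - \<phi> 0 = t * \<phi>' \<sigma>"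
    using MVT2[OF t(1), of \<phi> \<phi>'] by auto
  define \<psi> where "\<psi> u = pd k w (y + \<sigma> *\<^sub>R ?a + u *\<^sub>R ?b)" for u
  have "DERIV \<psi> u :> pd i (pd k w) (y + \<sigma> *\<^sub>R ?a + u *\<^sub>R ?b)" if "0 \<le> u" "u \<le> t" for u
    unfolding \<psi>_def using that \<sigma> by (intro pd_has_real_derivative_along_axis dkw in_S) auto
  then obtain \<tau> where \<tau>: "0 < \<tau>" "\<tau> < t"
    "\<psi> t - \<psi> 0 = t * pd i (pd k w) (y + \<sigma> *\<^sub>R ?a + \<tau> *\<^sub>R ?b)"
    using MVT2[OF t(1), of \<psi> "\<lambda>u. pd i (pd k w) (y + \<sigma> *\<^sub>R ?a + u *\<^sub>R ?b)"] by auto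
  have "\<phi>' \<sigma> = \<psi> t - \<psi> 0"
    unfolding \<phi>'_def \<psi>_def by (simp add: algebra_simps)
  moreover have "\<phi> t - \<phi> 0 = w (y + t *\<^sub>R ?a + t *\<^sub>R ?b) - w (y + t *\<^sub>R ?a) - w (y + t *\<^sub>R ?b) + w y"
    unfolding \<phi>_def by (simp add: algebra_simps)
  ultimately show ?thesis using \<sigma> \<tau> by (intro exI[of _ \<sigma>] exI[of _ \<tau>]) auto
qed

text \<open>Both mixed partials are limits of the same second difference quotient, evaluated at
  mean-value points that approach \<open>y\<close>.\<close>

lemma pd_commute:
  fixes w :: "real^'n \<Rightarrow> real"
  assumes S: "open S" "y \<in> S" and w: "Ck 2 S w"
  shows "pd i (pd k w) y = pd k (pd i w) y"
proof (rule ccontr)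
  let ?L1 = "pd i (pd k w) y" and ?L2 = "pd k (pd i w) y"
  have dw: "w differentiable (at z)" and dpw: "pd j w differentiable (at z)" if "z \<in> S" for z j
    using w S(1) that by (auto simp: numeral_2_eq_2 differentiable_on_eq_differentiable_at)
  have "continuous_on S (pd j (pd l w))" for j l
    using w by (simp add: numeral_2_eq_2)
  then have cont: "isCont (pd j (pd l w)) y" for j l
    using S continuous_on_eq_continuous_at by blast
  assume "?L1 \<noteq> ?L2"
  define d where "d = \<bar>?L1 - ?L2\<bar> / 2"
  have d: "d > 0" using \<open>?L1 \<noteq> ?L2\<close> by (simp add: d_def)
  obtain r where r: "r > 0" "ball y r \<subseteq> S" using S open_contains_ball by blast
  obtain e1 where e1: "e1 > 0" "\<And>z. dist z y < e1 \<Longrightarrow> dist (pd i (pd k w) z) ?L1 < d"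
    using cont d unfolding continuous_at_eps_delta by blast
  obtain e2 where e2: "e2 > 0" "\<And>z. dist z y < e2 \<Longrightarrow> dist (pd k (pd i w) z) ?L2 < d"
    using cont d unfolding continuous_at_eps_delta by blast
  define t where "t = min r (min e1 e2) / 4"
  have t: "0 < t" "2 * t < r" "2 * t < e1" "2 * t < e2" using r e1 e2 by (auto simp: t_def)
  obtain \<sigma> \<tau> where st: "0 < \<sigma>" "\<sigma> < t" "0 < \<tau>" "\<tau> < t" and
    eq1: "w (y + t *\<^sub>R axis k 1 + t *\<^sub>R axis i 1) - w (y + t *\<^sub>R axis k 1) - w (y + t *\<^sub>R axis i 1) + w y
      = t * t * pd i (pd k w) (y + \<sigma> *\<^sub>R axis k 1 + \<tau> *\<^sub>R axis i 1)"
    using second_difference_mvt[OF r(2) t(1,2) dw dpw] by blast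
  obtain \<sigma>' \<tau>' where st': "0 < \<sigma>'" "\<sigma>' < t" "0 < \<tau>'" "\<tau>' < t" and
    eq2: "w (y + t *\<^sub>R axis i 1 + t *\<^sub>R axis k 1) - w (y + t *\<^sub>R axis i 1) - w (y + t *\<^sub>R axis k 1) + w y
      = t * t * pd k (pd i w) (y + \<sigma>' *\<^sub>R axis i 1 + \<tau>' *\<^sub>R axis k 1)"
    using second_difference_mvt[OF r(2) t(1,2) dw dpw] by blast
  have eq: "pd i (pd k w) (y + \<sigma> *\<^sub>R axis k 1 + \<tau> *\<^sub>R axis i 1)
      = pd k (pd i w) (y + \<sigma>' *\<^sub>R axis i 1 + \<tau>' *\<^sub>R axis k 1)"
    using eq1 eq2 t(1) by (simp add: algebra_simps)
  have near: "dist (y + s *\<^sub>R axis a 1 + u *\<^sub>R axis b 1) y < 2 * t"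
    if "0 < s" "s < t" "0 < u" "u < t" for s u and a b :: 'n
    using norm_triangle_ineq[of "s *\<^sub>R axis a (1::real)" "u *\<^sub>R axis b 1"] that
    by (simp add: dist_norm add.assoc)
  have "dist (pd i (pd k w) (y + \<sigma> *\<^sub>R axis k 1 + \<tau> *\<^sub>R axis i 1)) ?L1 < d"
    using e1(2) near[OF st, of k i] t(3) by simp
  moreover have "dist (pd k (pd i w) (y + \<sigma>' *\<^sub>R axis i 1 + \<tau>' *\<^sub>R axis k 1)) ?L2 < d"
    using e2(2) near[OF st', of i k] t(4) by simp
  ultimately have "\<bar>?L1 - ?L2\<bar> < 2 * d" using eq by (simp add: dist_real_def)
  then show False by (simp add: d_def)
qed

subsection \<open>The Einstein factor in an affine chart\<close>

lemma einstein_factor_gradient_relation: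
  fixes g :: "real^'n \<Rightarrow> real^'n^'n" and H :: "'n \<Rightarrow> real^'n \<Rightarrow> real" and Q :: "real^'n \<Rightarrow> real"
  assumes B: "open B" "z \<in> B"
    and g: "\<And>i j. Ck 1 B (\<lambda>y. g y $ i $ j)"
    and kahler: "pd k (\<lambda>y. g y $ i $ j) z = pd i (\<lambda>y. g y $ k $ j) z"
    and H: "Ck 2 B (H j)"
    and Q: "\<And>y. y \<in> B \<Longrightarrow> Q differentiable (at y)"
    and einstein: "\<And>y i. y \<in> B \<Longrightarrow> pd i (H j) y = Q y * g y $ i $ j"
  shows "pd k Q z * g z $ i $ j = pd i Q z * g z $ k $ j"
proof -
  have dg: "(\<lambda>y. g y $ l $ j) differentiable (at z)" for l
    using g B by (intro Ck_imp_differentiable_at[of 0]) simp_all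
  have d2H: "pd l (pd m (H j)) z = pd l (\<lambda>y. Q y * g y $ m $ j) z" for l m
    using pd_cong_open[OF B, of "pd m (H j)" "\<lambda>y. Q y * g y $ m $ j"] einstein by blast
  have "pd k (pd i (H j)) z = pd i (pd k (H j)) z"
    by (rule pd_commute[OF B H])
  then have "pd k (\<lambda>y. Q y * g y $ i $ j) z = pd i (\<lambda>y. Q y * g y $ k $ j) z"
    by (simp only: d2H)
  then show ?thesis
    using kahler by (simp add: pd_mult[OF Q[OF B(2)] dg])
qed

lemma nonsingular_matrix_entry_nonzero_near:
  fixes g :: "real^'n \<Rightarrow> real^'m::finite^'m"
  assumes U: "open U" "y0 \<in> U" and "det (g y0) \<noteq> 0"
    and cont: "\<And>i j. continuous_on U (\<lambda>y. g y $ i $ j)"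
  obtains r a b where "r > 0" "ball y0 r \<subseteq> U" "\<And>y. y \<in> ball y0 r \<Longrightarrow> g y $ a $ b \<noteq> 0"
proof -
  obtain a b where ab: "g y0 $ a $ b \<noteq> 0"
  proof -
    fix a :: 'm
    have "row a (g y0) \<noteq> 0"
      using assms(3) det_zero_row(2) by blast
    then show ?thesis
      using that by (auto simp: row_def vec_eq_iff)
  qed
  obtain r1 where r1: "r1 > 0" "\<forall>y\<in>U. dist y0 y < r1 \<longrightarrow> g y $ a $ b \<noteq> 0"
    using continuous_on_avoid[of U "\<lambda>y. g y $ a $ b" y0 0] cont U(2) ab by blast
  obtain r2 where r2: "r2 > 0" "ball y0 r2 \<subseteq> U"
    using U open_contains_ball by blast
  have ball: "ball y0 (min r1 r2) \<subseteq> U"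
    using subset_ball[OF min.cobounded2] r2(2) by (rule order_trans)
  show ?thesis
  proof (rule that[of "min r1 r2" a b])
    show "min r1 r2 > 0" using r1(1) r2(1) by simp
    show "g y $ a $ b \<noteq> 0" if y: "y \<in> ball y0 (min r1 r2)" for y
    proof -
      have "y \<in> U" using ball y by blast
      then show ?thesis using r1(2) y by simp
    qed
  qed (rule ball)
qed

text \<open>\<open>F\<close> need not be differentiable; near \<open>y0\<close> it coincides with the differentiable quotient
  \<open>d\<^sub>a H\<^sub>b / g\<^sub>a\<^sub>b\<close>, whose gradient vanishes.\<close>

lemma einstein_factor_locally_constant:
  fixes g :: "real^'n \<Rightarrow> real^'n^'n" and H :: "'n \<Rightarrow> real^'n \<Rightarrow> real" and F :: "real^'n \<Rightarrow> real"
  assumes U: "open U" "y0 \<in> U" and dim: "CARD('n) \<ge> 2"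
    and det: "\<And>y. y \<in> U \<Longrightarrow> det (g y) \<noteq> 0"
    and g: "\<And>i j. Ck 1 U (\<lambda>y. g y $ i $ j)"
    and kahler: "\<And>y i j k. y \<in> U \<Longrightarrow> pd i (\<lambda>z. g z $ j $ k) y = pd j (\<lambda>z. g z $ i $ k) y"
    and H: "\<And>j. Ck 2 U (H j)"
    and einstein: "\<And>y i j. y \<in> U \<Longrightarrow> pd i (H j) y = F y * g y $ i $ j"
  shows "\<exists>r>0. ball y0 r \<subseteq> U \<and> (\<forall>y\<in>ball y0 r. F y = F y0)"
proof -
  have "continuous_on U (\<lambda>y. g y $ i $ j)" for i j
    using Ck_mono[OF g, of 0] by simp
  then obtain a b r where r: "r > 0" "ball y0 r \<subseteq> U"
    and gab: "\<And>y. y \<in> ball y0 r \<Longrightarrow> g y $ a $ b \<noteq> 0"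
    using nonsingular_matrix_entry_nonzero_near[of U y0 g, OF U det[OF U(2)]] by metis
  define B where "B = ball y0 r"
  have B: "open B" "B \<subseteq> U" "y0 \<in> B" using r by (simp_all add: B_def)
  define Q where "Q y = pd a (H b) y / g y $ a $ b" for y
  have FQ: "F y = Q y" if "y \<in> B" for y
    using einstein[of y a b] B(2) that gab[of y] by (auto simp: Q_def B_def)
  have Q_diff: "Q differentiable (at y)" if "y \<in> B" for y
  proof -
    have "pd a (H b) differentiable (at y)" "(\<lambda>y. g y $ a $ b) differentiable (at y)"
      using H[of b] g[of a b] U(1) B(2) that
      by (auto simp: numeral_2_eq_2 differentiable_on_eq_differentiable_at)
    then show ?thesis
      unfolding Q_def[abs_def] using gab[of y] that by (simp add: B_def)
  qed
  have pdQ: "pd k Q y = 0" if "y \<in> B" for k y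
  proof (rule tensor_product_swap_symmetric_imp_zero[OF dim det])
    show "y \<in> U" using B(2) that by blast
    show "pd k Q y * g y $ i $ j = pd i Q y * g y $ k $ j" for i j k
    proof (rule einstein_factor_gradient_relation[OF B(1) that _ _ _ Q_diff])
      show "Ck 1 B (\<lambda>y. g y $ i $ j)" for i j using Ck_subset[OF g B(2)] .
      show "Ck 2 B (H j)" using Ck_subset[OF H B(2)] .
      show "pd k (\<lambda>y. g y $ i $ j) y = pd i (\<lambda>y. g y $ k $ j) y"
        using kahler B(2) that by blast
      show "pd i (H j) z = Q z * g z $ i $ j" if "z \<in> B" for z i
        using einstein[of z i j] FQ[OF that] B(2) that by auto
    qed
  qed
  have "F y = F y0" if "y \<in> B" for y
    using pd_zero_imp_constant[OF B(1) _ Q_diff pdQ that B(3)] FQ[OF that] FQ[OF B(3)]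
    by (simp add: B_def)
  with r show ?thesis
    unfolding B_def by blast
qed

subsection \<open>Globalisation\<close>

lemma locally_constant_on_connected_space:
  assumes "connected_space X"
    and local: "\<And>p. p \<in> topspace X \<Longrightarrow> \<exists>V. openin X V \<and> p \<in> V \<and> (\<forall>q\<in>V. f q = f p)"
    and "p0 \<in> topspace X" "p \<in> topspace X"
  shows "f p = f p0"
proof -
  have level_open: "openin X {q \<in> topspace X. P (f q)}" for P
  proof -
    have "\<exists>T. openin X T \<and> q \<in> T \<and> T \<subseteq> {q \<in> topspace X. P (f q)}"
      if q: "q \<in> topspace X" "P (f q)" for q
    proof -
      obtain V where V: "openin X V" "q \<in> V" "\<forall>q'\<in>V. f q' = f q"
        using local[OF q(1)] by blast
      have "V \<subseteq> {q \<in> topspace X. P (f q)}"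
      proof
        fix q' assume "q' \<in> V"
        then have "q' \<in> topspace X" "f q' = f q" using openin_subset[OF V(1)] V(3) by auto
        then show "q' \<in> {q \<in> topspace X. P (f q)}" using q(2) by simp
      qed
      with V show ?thesis by blast
    qed
    then show ?thesis by (subst openin_subopen) blast
  qed
  have "topspace X - {q \<in> topspace X. f q = f p0} = {q \<in> topspace X. f q \<noteq> f p0}"
    by blast
  then have "closedin X {q \<in> topspace X. f q = f p0}"
    using level_open[of "\<lambda>x. x \<noteq> f p0"] unfolding closedin_def by simp
  then have "{q \<in> topspace X. f q = f p0} = topspace X"
    using assms(1,3) level_open[of "\<lambda>x. x = f p0"] unfolding connected_space_clopen_in by blast
  then show ?thesis using assms(4) by blast
qed

lemma koszul_Ck:
  assumes "kahler_affine X A G" "c \<in> A"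
  shows "Ck k (snd c ` fst c) (koszul G c j)"
proof -
  let ?U = "snd c ` fst c"
  have U: "open ?U" and det: "\<And>y. y \<in> ?U \<Longrightarrow> det (G c y) \<noteq> 0"
    and g: "\<And>m i j. Ck m ?U (\<lambda>y. G c y $ i $ j)"
    using assms unfolding kahler_affine_def manifold_atlas_def smooth_on_def by auto
  have "Ck k ?U (\<lambda>y. matrix_inv (G c y) $ p $ q * pd j (\<lambda>z. G c z $ p $ q) y)" for p q
    using g[of "Suc k"] by (intro Ck_mult[OF U] Ck_matrix_inv[OF U g det]) auto
  then have "Ck k ?U (\<lambda>y. \<Sum>p\<in>UNIV. \<Sum>q\<in>UNIV. matrix_inv (G c y) $ p $ q * pd j (\<lambda>z. G c z $ p $ q) y)"
    by (intro Ck_sum[OF U] finite_class.finite_UNIV)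
  then show ?thesis unfolding koszul_def .
qed

lemma einstein_function_locally_constant:
  fixes A :: "('a, 'n::finite) chart set" and f :: "'a \<Rightarrow> real"
  assumes dim: "CARD('n) \<ge> 2" and KA: "kahler_affine X A G"
    and einstein: "\<forall>c\<in>A. \<forall>p\<in>fst c. \<forall>i j. ka_ricci G c i j (snd c p) = f p * (G c (snd c p) $ i $ j)"
    and p: "p \<in> topspace X"
  shows "\<exists>V. openin X V \<and> p \<in> V \<and> (\<forall>q\<in>V. f q = f p)"
proof -
  obtain c where c: "c \<in> A" "p \<in> fst c"
    using p KA unfolding kahler_affine_def manifold_atlas_def by blast
  define U where "U = snd c ` fst c"
  define \<phi> where "\<phi> = snd c"
  define F where "F y = - f (inv_into (fst c) \<phi> y)" for y
  have chart: "openin X (fst c)" "open U" "homeomorphic_map (subtopology X (fst c)) (top_of_set U) \<phi>"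
    and det: "\<And>y. y \<in> U \<Longrightarrow> det (G c y) \<noteq> 0"
    and g: "\<And>m i j. Ck m U (\<lambda>y. G c y $ i $ j)"
    and kahler: "\<And>y i j k. y \<in> U \<Longrightarrow> pd i (\<lambda>z. G c z $ j $ k) y = pd j (\<lambda>z. G c z $ i $ k) y"
    using KA c(1) unfolding kahler_affine_def manifold_atlas_def smooth_on_def U_def \<phi>_def by auto
  have inv_chart: "inv_into (fst c) \<phi> (\<phi> q) = q" if "q \<in> fst c" for q
    using homeomorphic_imp_injective_map[OF chart(3)] openin_subset[OF chart(1)] that
    by (simp add: Int_absorb1 inv_into_f_f)
  have "\<exists>r>0. ball (\<phi> p) r \<subseteq> U \<and> (\<forall>y\<in>ball (\<phi> p) r. F y = F (\<phi> p))"
  proof (rule einstein_factor_locally_constant[OF chart(2) _ dim det g kahler])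
    show "\<phi> p \<in> U" using c(2) by (simp add: U_def \<phi>_def)
    show "Ck 2 U (koszul G c j)" for j using koszul_Ck[OF KA c(1)] by (simp add: U_def)
    show "pd i (koszul G c j) y = F y * G c y $ i $ j" if y: "y \<in> U" for y i j
    proof -
      obtain q where q: "q \<in> fst c" "y = \<phi> q" using y by (auto simp: U_def \<phi>_def)
      then have "ka_ricci G c i j (\<phi> q) = f q * G c (\<phi> q) $ i $ j"
        using einstein c(1) by (simp add: \<phi>_def)
      then show ?thesis using q inv_chart[OF q(1)] by (simp add: ka_ricci_def F_def)
    qed
  qed
  then obtain r where r: "r > 0" "ball (\<phi> p) r \<subseteq> U" "\<forall>y\<in>ball (\<phi> p) r. F y = F (\<phi> p)"
    by blast
  define V where "V = {q \<in> topspace (subtopology X (fst c)). \<phi> q \<in> ball (\<phi> p) r}"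
  have "openin (subtopology X (fst c)) V"
    unfolding V_def using open_subset[OF r(2) open_ball]
    by (rule openin_continuous_map_preimage[OF homeomorphic_imp_continuous_map[OF chart(3)]])
  then have "openin X V" using openin_open_subtopology[OF chart(1)] by blast
  moreover have "p \<in> V" using c p r(1) by (simp add: V_def)
  moreover have "f q = f p" if "q \<in> V" for q
  proof -
    have q: "q \<in> fst c" "\<phi> q \<in> ball (\<phi> p) r" using that by (auto simp: V_def)
    then have "F (\<phi> q) = F (\<phi> p)" using r(3) by blast
    then show ?thesis using inv_chart[OF q(1)] inv_chart[OF c(2)] by (simp add: F_def)
  qed
  ultimately show ?thesis by blast
qed

lemma ka_scalar_einstein:
  fixes G :: "('a, 'n::finite) chart \<Rightarrow> real^'n \<Rightarrow> real^'n^'n"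
  assumes "transpose (G c y) = G c y" "det (G c y) \<noteq> 0"
    and "\<And>i j. ka_ricci G c i j y = \<mu> * G c y $ i $ j"
  shows "ka_scalar G c y = \<mu> * real CARD('n)"
proof -
  have "ka_scalar G c y = \<mu> * (\<Sum>i\<in>UNIV. \<Sum>j\<in>UNIV. matrix_inv (G c y) $ i $ j * G c y $ i $ j)"
    unfolding ka_scalar_def assms(3) by (simp add: sum_distrib_left algebra_simps)
  then show ?thesis
    using trace_matrix_inv_mult_symmetric[OF assms(1,2)] by simp
qed

theorem lemma5p3:
  fixes X :: "'a topology"
    and A :: "('a, 'n::finite) chart set"
    and G :: "('a, 'n) chart \<Rightarrow> real^'n \<Rightarrow> real^'n^'n"
    and f :: "'a \<Rightarrow> real"
  assumes "CARD('n) \<ge> 2"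
    and "connected_space X"
    and "kahler_affine X A G"
    and "\<forall>c\<in>A. \<forall>p\<in>fst c. \<forall>i j.
           ka_ricci G c i j (snd c p) = f p * (G c (snd c p) $ i $ j)"
  shows "\<exists>s. \<forall>c\<in>A. \<forall>p\<in>fst c. ka_scalar G c (snd c p) = s"
proof -
  have chart: "fst c \<subseteq> topspace X" "transpose (G c (snd c p)) = G c (snd c p)"
      "det (G c (snd c p)) \<noteq> 0" if "c \<in> A" "p \<in> fst c" for c p
    using assms(3) that unfolding kahler_affine_def manifold_atlas_def by auto
  show ?thesis
  proof (cases "topspace X = {}")
    case True
    then show ?thesis using chart(1) by blast
  next
    case False
    then obtain p0 where p0: "p0 \<in> topspace X" by blast
    show ?thesis
    proof (intro exI ballI)
      fix c p assume cp: "c \<in> A" "p \<in> fst c"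
      then have "f p = f p0"
        using locally_constant_on_connected_space[OF assms(2) _ p0]
          einstein_function_locally_constant[OF assms(1,3,4)] chart(1) by blast
      then show "ka_scalar G c (snd c p) = f p0 * real CARD('n)"
        using ka_scalar_einstein[of G c "snd c p", OF chart(2,3)[OF cp]] assms(4) cp by simp
    qed
  qed
qed

end
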